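(* Let $\kappa>0$, $\beta>0$, $\lambda>0$ and $U\neq0$ be real. Suppose $(Q,P,X,Z)\in\mathbb{R}^4$ with $Q\neq0$ satisfies \begin{align*} P-\kappa Q+sP&=0,\\ Q+2\sqrt2\,\lambda X+sQ+\kappa P&=0,\\ X-2\sqrt2\,\frac{\lambda}{\beta}\,ZQ&=0,\\ X^2+Z^2&=\tfrac14, \end{align*} where $s:=\frac U2(Q^2+P^2)$. Then $s\neq-1$, $$P=\frac{\kappa}{1+s}Q,\qquad X=\frac{2\sqrt2\,\lambda Q}{\beta}Z,\qquad Z=-\frac{\beta}{8\lambda^2}\,\frac{(s+1)^2+\kappa^2}{s+1},$$ $$Q^2=\frac{2s(s+1)^2}{U\big[(s+1)^2+\kappa^2\big]},\qquad P^2=\frac{2s\kappa^2}{U\big[(s+1)^2+\kappa^2\big]},$$ and $s$ is a root of $$f(s)=\big((s+1)^2+\kappa^2\big)\Big[\frac1U\,s(s+1)^2+\frac{\beta^2}{16\lambda^2}\big((s+1)^2+\kappa^2\big)\Big]-\lambda^2(s+1)^2 .$$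
   Context: These are the steady-state mean-field equations (with $Y=0$) of the dissipative quantum Rabi model with Kerr nonlinearity, written in normalized units: $\kappa$ and $\lambda$ stand for $\kappa/\omega_c$ and $\lambda/\omega_c$, $\beta=\omega_a/\omega_c$, $U=2KN/\omega_c$, and $s=U|\alpha|^2$ with $|\alpha|^2=(Q^2+P^2)/2$. Solutions with $Q\neq0$ are the superradiant steady states. *)

theory Defs
  imports Complex_Main
begin

end

theory Submission
  imports Defs
begin

text \<open>Writing \<open>t = s + 1\<close>, the first equation reads \<open>t P = \<kappa> Q\<close>, so \<open>t \<noteq> 0\<close> and \<open>P\<close> is
  proportional to \<open>Q\<close>; the third equation makes \<open>X\<close> proportional to \<open>Q Z\<close>. Substituting both
  into the second equation and cancelling \<open>Q \<noteq> 0\<close> determines \<open>Z\<close>, and the definition of \<open>s\<close>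
  determines \<open>Q\<^sup>2\<close> and \<open>P\<^sup>2\<close>. The Bloch-sphere constraint \<open>X\<^sup>2 + Z\<^sup>2 = 1/4\<close> then becomes a
  polynomial equation in \<open>s\<close> alone.\<close>

lemma quadratures_sq_of_proportional:
  fixes U s t k Q P :: real
  assumes "t \<noteq> 0" and "U \<noteq> 0"
    and P: "P = k / t * Q" and s: "s = U / 2 * (Q^2 + P^2)"
  shows "Q^2 = 2 * s * t^2 / (U * (t^2 + k^2))"
    and "P^2 = 2 * s * k^2 / (U * (t^2 + k^2))"
proof -
  have UA: "U * (t^2 + k^2) \<noteq> 0"
    using \<open>t \<noteq> 0\<close> \<open>U \<noteq> 0\<close> by (simp add: add_pos_nonneg)
  have "2 * s * t^2 = Q^2 * (U * (t^2 + k^2))"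
    using s P \<open>t \<noteq> 0\<close> by (simp add: field_simps power2_eq_square)
  then show Q2: "Q^2 = 2 * s * t^2 / (U * (t^2 + k^2))"
    using UA by (simp add: eq_divide_eq)
  have "P^2 = k^2 / t^2 * Q^2"
    using P by (simp add: power_mult_distrib power_divide)
  then show "P^2 = 2 * s * k^2 / (U * (t^2 + k^2))"
    using Q2 \<open>t \<noteq> 0\<close> by simp
qed

lemma spin_Z_of_cavity_balance:
  fixes t kap bet lam Q P X Z :: real
  assumes "t \<noteq> 0" and "Q \<noteq> 0" and "bet \<noteq> 0" and "lam \<noteq> 0"
    and balance: "t * Q + kap * P + 2 * sqrt 2 * lam * X = 0"
    and P: "P = kap / t * Q" and X: "X = 2 * sqrt 2 * lam * Q / bet * Z"
  shows "Z = - (bet / (8 * lam^2)) * ((t^2 + kap^2) / t)"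
proof -
  have "Q * ((t^2 + kap^2) / t + 8 * lam^2 / bet * Z) = 0"
    using balance \<open>t \<noteq> 0\<close> \<open>bet \<noteq> 0\<close>
    unfolding P X by (simp add: field_simps power2_eq_square)
  then have "(t^2 + kap^2) / t + 8 * lam^2 / bet * Z = 0"
    using \<open>Q \<noteq> 0\<close> by simp
  then show ?thesis
    using \<open>t \<noteq> 0\<close> \<open>bet \<noteq> 0\<close> \<open>lam \<noteq> 0\<close> by (simp add: field_simps)
qed

lemma Bloch_constraint_polynomial:
  fixes t kap bet lam U s Q X Z :: real
  assumes "t \<noteq> 0" and "bet \<noteq> 0" and "lam \<noteq> 0" and "U \<noteq> 0"
    and Q: "Q^2 = 2 * s * t^2 / (U * (t^2 + kap^2))"
    and X: "X = 2 * sqrt 2 * lam * Q / bet * Z"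
    and Z: "Z = - (bet / (8 * lam^2)) * ((t^2 + kap^2) / t)"
    and Bloch: "X^2 + Z^2 = 1/4"
  shows "(t^2 + kap^2) * (1 / U * s * t^2 + bet^2 / (16 * lam^2) * (t^2 + kap^2))
    - lam^2 * t^2 = 0"
proof -
  define A where "A = t^2 + kap^2"
  have "A > 0"
    unfolding A_def using \<open>t \<noteq> 0\<close> by (simp add: add_pos_nonneg)
  have Z2: "Z^2 = bet^2 * A^2 / (64 * lam^4 * t^2)"
    using Z unfolding A_def by (simp add: field_simps power2_eq_square power4_eq_xxxx)
  have "X^2 = 8 * lam^2 / bet^2 * Q^2 * Z^2"
    using X by (simp add: power_mult_distrib power_divide)
  also have "\<dots> = s * A / (4 * U * lam^2)"
    using \<open>A > 0\<close> \<open>t \<noteq> 0\<close> \<open>bet \<noteq> 0\<close> \<open>lam \<noteq> 0\<close> \<open>U \<noteq> 0\<close>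
    unfolding Z2 Q A_def[symmetric] by (simp add: field_simps power2_eq_square power4_eq_xxxx)
  finally have "s * A / (4 * U * lam^2) + bet^2 * A^2 / (64 * lam^4 * t^2) = 1/4"
    using Bloch Z2 by simp
  then have "(s * A / (4 * U * lam^2) + bet^2 * A^2 / (64 * lam^4 * t^2)) * (4 * lam^2 * t^2)
      = lam^2 * t^2"
    by simp
  moreover have "(s * A / (4 * U * lam^2) + bet^2 * A^2 / (64 * lam^4 * t^2)) * (4 * lam^2 * t^2)
      = A * (1 / U * s * t^2 + bet^2 / (16 * lam^2) * A)"
    using \<open>t \<noteq> 0\<close> \<open>lam \<noteq> 0\<close> \<open>U \<noteq> 0\<close> by (simp add: field_simps power2_eq_square power4_eq_xxxx)
  ultimately show ?thesis
    unfolding A_def by simp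
qed

theorem mainTheorem3:
  fixes kap bet lam U Q P X Z s :: real
  assumes "kap > 0" and "bet > 0" and "lam > 0" and "U \<noteq> 0"
    and "Q \<noteq> 0"
    and s_def: "s = U / 2 * (Q^2 + P^2)"
    and e1: "P - kap * Q + s * P = 0"
    and e2: "Q + 2 * sqrt 2 * lam * X + s * Q + kap * P = 0"
    and e3: "X - 2 * sqrt 2 * (lam / bet) * Z * Q = 0"
    and e4: "X^2 + Z^2 = 1/4"
  shows "s \<noteq> -1
    \<and> P = kap / (1 + s) * Q
    \<and> X = 2 * sqrt 2 * lam * Q / bet * Z
    \<and> Z = - (bet / (8 * lam^2)) * (((s + 1)^2 + kap^2) / (s + 1))
    \<and> Q^2 = 2 * s * (s + 1)^2 / (U * ((s + 1)^2 + kap^2))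
    \<and> P^2 = 2 * s * kap^2 / (U * ((s + 1)^2 + kap^2))
    \<and> ((s + 1)^2 + kap^2) * (1 / U * s * (s + 1)^2
        + bet^2 / (16 * lam^2) * ((s + 1)^2 + kap^2)) - lam^2 * (s + 1)^2 = 0"
proof -
  define t where "t = s + 1"
  have tP: "t * P = kap * Q"
    using e1 unfolding t_def by (simp add: algebra_simps)
  then have "t \<noteq> 0"
    using \<open>kap > 0\<close> \<open>Q \<noteq> 0\<close> by auto
  have P: "P = kap / t * Q"
    using tP \<open>t \<noteq> 0\<close> by (simp add: field_simps)
  have X: "X = 2 * sqrt 2 * lam * Q / bet * Z"
    using e3 by (simp add: field_simps)
  have "t * Q + kap * P + 2 * sqrt 2 * lam * X = 0"
    using e2 unfolding t_def by (simp add: algebra_simps)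
  then have Z: "Z = - (bet / (8 * lam^2)) * ((t^2 + kap^2) / t)"
    using spin_Z_of_cavity_balance \<open>t \<noteq> 0\<close> \<open>Q \<noteq> 0\<close> \<open>bet > 0\<close> \<open>lam > 0\<close> P X by simp
  note Q2 = quadratures_sq_of_proportional[OF \<open>t \<noteq> 0\<close> \<open>U \<noteq> 0\<close> P s_def]
  have "(t^2 + kap^2) * (1 / U * s * t^2 + bet^2 / (16 * lam^2) * (t^2 + kap^2)) - lam^2 * t^2 = 0"
    using Bloch_constraint_polynomial[OF \<open>t \<noteq> 0\<close> _ _ \<open>U \<noteq> 0\<close> Q2(1) X Z e4] \<open>bet > 0\<close> \<open>lam > 0\<close>
    by simp
  with \<open>t \<noteq> 0\<close> P X Z Q2 show ?thesis
    unfolding t_def by (simp add: add.commute)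
qed

end
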